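(* In the one-shot linear delivery model described in the context, consider a single communication block in which a set $\{\mathbf{w}_{n_l,f_l}\}_{l=1}^L$ of $L$ packets is scheduled to be transmitted together to $L$ distinct receivers (packet $l$ intended for the $l$-th of these receivers). In order for each receiver to successfully decode its desired packet, necessarily $$L\le\min_{l\in[L]}\big(|\mathcal{T}_l|+|\mathcal{R}_l|\big),$$ where $\mathcal{T}_l$ and $\mathcal{R}_l$ denote the sets of transmitters and of receivers, respectively, that have cached the packet $\mathbf{w}_{n_l,f_l}$.
   Context: Network: transmitters $\text{Tx}_1,\dots,\text{Tx}_{K_T}$, receivers $\text{Rx}_1,\dots,\text{Rx}_{K_R}$, channel $Y_j=\sum_i h_{ji}X_i+Z_j$ with fixed complex gains $h_{ji}$ and Gaussian noise. Each transmitter and receiver has cached a set of whole packets of a file library. Each packet $\mathbf{w}_{n,f}$ is encoded into a coded packet $\tilde{\mathbf{w}}_{n,f}\in\mathbb{C}^{\tilde B}$ carrying one degree of freedom. In a block where a set $\mathcal{D}$ of packets is scheduled, transmitter $\text{Tx}_i$ sends $\mathbf{x}_i=\sum_{\mathbf{w}_{n,f}\in\mathcal{D}\text{ cached at }\text{Tx}_i} v_{i,n,f}\tilde{\mathbf{w}}_{n,f}$ with complex coefficients $v_{i,n,f}$; a scheduled receiver $\text{Rx}_j$ receives $\mathbf{y}_j=\sum_i h_{ji}\mathbf{x}_i+\mathbf{z}_j$ and forms a linear combination of $\mathbf{y}_j$ and the coded packets it has cached. Decoding is successful if this linear combination equals its desired coded packet plus $\mathbf{z}_j$ (all interference removed)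.
   Formalization: The channel gains $h_{ji}$ are generic, every square submatrix of the receiver-by-transmitter gain matrix being nonsingular, and no scheduled receiver has cached its own desired packet. Each condition added here is assumed in the paper as well or is needed for the statement above to hold. *)

theory Defs
  imports "HOL-Analysis.Analysis"
begin

text \<open>Transmitters are the elements of a finite type 'tx, receivers of a finite type 'rx,
  library packets of a finite type 'p. Coded packets live in complex^'b.
  In a block, the scheduled packets are sched 0, ..., sched (L-1); packet l is
  intended for receiver rcv l. v i l is the coefficient of Tx i for packet l.\<close>

definition tx_signal ::
  "('tx \<Rightarrow> 'p set) \<Rightarrow> nat \<Rightarrow> (nat \<Rightarrow> 'p) \<Rightarrow> ('tx \<Rightarrow> nat \<Rightarrow> complex)
     \<Rightarrow> ('p \<Rightarrow> complex^'b) \<Rightarrow> 'tx \<Rightarrow> complex^'b" where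
  "tx_signal TxCache L sched v wt i =
     (\<Sum>l \<in> {l. l < L \<and> sched l \<in> TxCache i}. v i l *s wt (sched l))"

definition rx_signal ::
  "('rx \<Rightarrow> 'tx::finite \<Rightarrow> complex) \<Rightarrow> ('tx \<Rightarrow> 'p set) \<Rightarrow> nat \<Rightarrow> (nat \<Rightarrow> 'p)
     \<Rightarrow> ('tx \<Rightarrow> nat \<Rightarrow> complex) \<Rightarrow> ('p \<Rightarrow> complex^'b) \<Rightarrow> complex^'b \<Rightarrow> 'rx \<Rightarrow> complex^'b" where
  "rx_signal h TxCache L sched v wt z j =
     (\<Sum>i\<in>UNIV. h j i *s tx_signal TxCache L sched v wt i) + z"

definition decodes ::
  "'b::finite itself \<Rightarrow> ('rx \<Rightarrow> 'tx::finite \<Rightarrow> complex) \<Rightarrow> ('tx \<Rightarrow> 'p set) \<Rightarrow> ('rx \<Rightarrow> 'p set)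
     \<Rightarrow> nat \<Rightarrow> (nat \<Rightarrow> 'p) \<Rightarrow> ('tx \<Rightarrow> nat \<Rightarrow> complex) \<Rightarrow> 'rx \<Rightarrow> 'p \<Rightarrow> bool" where
  "decodes (_::'b::finite itself) h TxCache RxCache L sched v j p \<longleftrightarrow>
     (\<exists>(a::complex) (c::'p \<Rightarrow> complex).
        \<forall>(wt::'p \<Rightarrow> complex^'b) (z::complex^'b).
          a *s rx_signal h TxCache L sched v wt z j + (\<Sum>q\<in>RxCache j. c q *s wt q)
            = wt p + z)"

text \<open>Generic channel: every square submatrix of the channel matrix (rows = receivers,
  columns = transmitters) is nonsingular.\<close>
definition generic_channel :: "('rx \<Rightarrow> 'tx \<Rightarrow> complex) \<Rightarrow> bool" where
  "generic_channel h \<longleftrightarrow>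
     (\<forall>(S::'rx set) (T::'tx set). finite S \<and> finite T \<and> card S = card T \<longrightarrow>
        (\<forall>u::'tx \<Rightarrow> complex. (\<forall>j\<in>S. (\<Sum>i\<in>T. h j i * u i) = 0) \<longrightarrow> (\<forall>i\<in>T. u i = 0)))"

end

theory Submission
  imports Defs
begin

text \<open>Evaluating the decoding identity on a coded-packet assignment that is nonzero only at
  the scheduled packet l shows that the overall channel gain of packet l at a receiver j not
  caching it must be 1 if j wants packet l and 0 otherwise. For fixed l, the receivers
  rcv l' with l' \<noteq> l that do not cache packet l thus impose at least L - 1 - |R_l| linear
  zero-forcing conditions on the coefficients of the |T_l| transmitters caching packet l,
  which are not all zero because the gain at rcv l is 1. For a generic channel such a
  nonzero solution exists only if there are fewer conditions than unknowns.\<close>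

definition packet_gain ::
  "('rx \<Rightarrow> 'tx \<Rightarrow> complex) \<Rightarrow> ('tx \<Rightarrow> 'p set) \<Rightarrow> (nat \<Rightarrow> 'p) \<Rightarrow> ('tx \<Rightarrow> nat \<Rightarrow> complex)
     \<Rightarrow> 'rx \<Rightarrow> nat \<Rightarrow> complex" where
  "packet_gain h TxCache sched v j l = (\<Sum>i\<in>{i. sched l \<in> TxCache i}. h j i * v i l)"

lemma tx_signal_single_packet:
  assumes "inj_on sched {..<L}" and "l < L"
  shows "tx_signal TxCache L sched v (\<lambda>q. if q = sched l then w else 0) i
           = (if sched l \<in> TxCache i then v i l *s w else 0)"
proof -
  have "tx_signal TxCache L sched v (\<lambda>q. if q = sched l then w else 0) i
      = (\<Sum>l'\<in>{l'. l' < L \<and> sched l' \<in> TxCache i}. if l' = l then v i l *s w else 0)"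
    unfolding tx_signal_def
    using assms by (intro sum.cong) (auto simp: inj_on_def)
  then show ?thesis
    using \<open>l < L\<close> by (simp add: sum.delta)
qed

lemma rx_signal_single_packet:
  fixes h :: "'rx \<Rightarrow> 'tx::finite \<Rightarrow> complex"
  assumes "inj_on sched {..<L}" and "l < L"
  shows "rx_signal h TxCache L sched v (\<lambda>q. if q = sched l then w else 0) z j
           = packet_gain h TxCache sched v j l *s w + z"
  using assms
  by (simp add: rx_signal_def packet_gain_def tx_signal_single_packet if_distrib
      sum.If_cases vec_eq_iff sum_component sum_distrib_right vector_smult_assoc)

lemma decodes_packet_gain:
  fixes h :: "'rx \<Rightarrow> 'tx::finite \<Rightarrow> complex" and sched :: "nat \<Rightarrow> 'p"
  assumes "decodes TYPE('b::finite) h TxCache RxCache L sched v j q"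
    and "inj_on sched {..<L}" and "l < L" and "sched l \<notin> RxCache j"
  shows "packet_gain h TxCache sched v j l = (if q = sched l then 1 else 0)"
proof -
  obtain a c where decoder: "\<And>(wt::'p \<Rightarrow> complex^'b) z.
      a *s rx_signal h TxCache L sched v wt z j + (\<Sum>p\<in>RxCache j. c p *s wt p) = wt q + z"
    using assms(1) unfolding decodes_def by blast
  define e :: "complex^'b" where "e = (\<chi> _. 1)"
  define wt where "wt = (\<lambda>p. if p = sched l then e else 0)"
  \<comment> \<open>Silent transmitters and noise e: the decoder must pass the noise through unscaled.\<close>
  have "a *s e = e"
    using decoder[of "\<lambda>_. 0" e] by (simp add: rx_signal_def tx_signal_def)
  then have "a = 1"
    by (metis e_def mult_cancel_right1 one_neq_zero vec_lambda_beta vector_smult_component)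
  moreover have "(\<Sum>p\<in>RxCache j. c p *s wt p) = 0"
    using assms(4) by (intro sum.neutral) (auto simp: wt_def)
  moreover have "rx_signal h TxCache L sched v wt 0 j = packet_gain h TxCache sched v j l *s e"
    unfolding wt_def by (simp add: rx_signal_single_packet[OF assms(2,3)])
  ultimately have "packet_gain h TxCache sched v j l *s e = wt q"
    using decoder[of wt 0] by simp
  obtain k :: 'b where True by simp
  from \<open>packet_gain h TxCache sched v j l *s e = wt q\<close> have "packet_gain h TxCache sched v j l = wt q $ k"
    by (metis e_def mult.right_neutral vec_lambda_beta vector_smult_component)
  then show ?thesis
    by (simp add: wt_def e_def)
qed

lemma generic_channel_zero_forcing_card_less:
  assumes "generic_channel h" and "finite S" and "finite T"
    and "\<forall>j\<in>S. (\<Sum>i\<in>T. h j i * u i) = 0" and "\<exists>i\<in>T. u i \<noteq> 0"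
  shows "card S < card T"
proof (rule ccontr)
  assume "\<not> card S < card T"
  then obtain S' where "S' \<subseteq> S" "card S' = card T" "finite S'"
    by (meson not_less obtain_subset_with_card_n)
  then show False
    using assms unfolding generic_channel_def by blast
qed

theorem lemma3:
  fixes h :: "'rx::finite \<Rightarrow> 'tx::finite \<Rightarrow> complex"
    and TxCache :: "'tx \<Rightarrow> ('p::finite) set"
    and RxCache :: "'rx \<Rightarrow> 'p set"
    and L :: nat
    and sched :: "nat \<Rightarrow> 'p"
    and rcv :: "nat \<Rightarrow> 'rx"
    and v :: "'tx \<Rightarrow> nat \<Rightarrow> complex"
  assumes "generic_channel h"
    and "inj_on sched {..<L}"
    and "inj_on rcv {..<L}"
    and "\<forall>l<L. sched l \<notin> RxCache (rcv l)"
    and "\<forall>l<L. decodes TYPE('b::finite) h TxCache RxCache L sched v (rcv l) (sched l)"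
  shows "\<forall>l<L. L \<le> card {i. sched l \<in> TxCache i} + card {j. sched l \<in> RxCache j}"
proof (intro allI impI)
  fix l assume "l < L"
  define T where "T = {i. sched l \<in> TxCache i}"
  define R where "R = {j. sched l \<in> RxCache j}"
  define J where "J = rcv ` ({..<L} - {l}) - R"
  have gain_wanted: "packet_gain h TxCache sched v (rcv l) l = 1"
    using decodes_packet_gain[OF assms(5)[rule_format] assms(2)] assms(4) \<open>l < L\<close> by simp
  have gain_other: "packet_gain h TxCache sched v j l = 0" if "j \<in> J" for j
  proof -
    obtain l' where l': "l' < L" "l' \<noteq> l" "j = rcv l'" "sched l \<notin> RxCache j"
      using \<open>j \<in> J\<close> unfolding J_def R_def by blast
    moreover have "sched l' \<noteq> sched l"
      using assms(2) \<open>l < L\<close> l' by (auto simp: inj_on_def)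
    ultimately show ?thesis
      using decodes_packet_gain[OF assms(5)[rule_format, OF \<open>l' < L\<close>] assms(2) \<open>l < L\<close>]
      by auto
  qed
  have "card J < card T"
  proof (rule generic_channel_zero_forcing_card_less[OF assms(1), where u = "\<lambda>i. v i l"])
    show "\<forall>j\<in>J. (\<Sum>i\<in>T. h j i * v i l) = 0"
      using gain_other by (simp add: T_def packet_gain_def)
    show "\<exists>i\<in>T. v i l \<noteq> 0"
      using gain_wanted by (auto simp: T_def packet_gain_def intro: ccontr)
  qed auto
  moreover have "L - 1 - card R \<le> card J"
    using diff_card_le_card_Diff[of R "rcv ` ({..<L} - {l})"] assms(3) \<open>l < L\<close>
    by (simp add: J_def card_image inj_on_subset)
  ultimately show "L \<le> card T + card R"
    by linarith
qed

end
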